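(* For any quantum channel $\mathcal{N}$, any integer $d\ge1$ with $I_d$ the noiseless qudit channel (identity channel on a $d$-dimensional system), and any $k>0$, $$F^{PPTp}(\mathcal{N}\otimes I_d,kd)=F^{PPTp}(\mathcal{N},k).$$ Consequently $\kappa^{PPTp}(\mathcal{N}\otimes I_d)=d\,\kappa^{PPTp}(\mathcal{N})$.
   Context: For a quantum channel $\mathcal{N}:\mathcal{L}(A')\to\mathcal{L}(B)$ with $A\cong A'$ and Choi matrix $J_{AB}=\sum_{i,j}|i\rangle\langle j|_A\otimes\mathcal{N}(|i\rangle\langle j|_{A'})$, and $k>0$, $F^{PPTp}(\mathcal{N},k)$ is the optimal value of: maximize $\operatorname{tr}(J_{AB}W_{AB})$ subject to $0\le W_{AB}\le\rho_A\otimes\mathbb{1}_B$, $\operatorname{tr}\rho_A=1$, $-\frac1k\rho_A\otimes\mathbb{1}_B\le W_{AB}^{T_B}\le\frac1k\rho_A\otimes\mathbb{1}_B$, where $T_B$ is partial transpose on $B$. (For a product channel the input system is $AA_2$ and output $BB_2$, with the partial transpose taken on the whole output.) $\kappa^{PPTp}(\mathcal{N})=\max\{k\ge0:F^{PPTp}(\mathcal{N},k)=1\}$. *)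

theory Defs
  imports "HOL-Analysis.Analysis"
begin

text \<open>Square complex matrices of dimension n are represented as functions
  nat => nat => complex; only the entries with indices below n are meaningful.
  Composite systems A (dim a) and B (dim b) use the index encoding
  (i, x) <-> i * b + x with i < a, x < b (first factor is the more significant one).\<close>

type_synonym cmat = "nat \<Rightarrow> nat \<Rightarrow> complex"

definition trace :: "nat \<Rightarrow> cmat \<Rightarrow> complex" where
  "trace n M = (\<Sum>i<n. M i i)"

definition mmult :: "nat \<Rightarrow> cmat \<Rightarrow> cmat \<Rightarrow> cmat" where
  "mmult n A B = (\<lambda>i j. \<Sum>l<n. A i l * B l j)"

definition idm :: "nat \<Rightarrow> cmat" where
  "idm n = (\<lambda>i j. if i = j then 1 else 0)"

text \<open>Positive semidefinite: the quadratic form is real and nonnegative (this also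
  forces hermiticity over the complex numbers).\<close>
definition psd :: "nat \<Rightarrow> cmat \<Rightarrow> bool" where
  "psd n M \<longleftrightarrow> (\<forall>v :: nat \<Rightarrow> complex.
      let q = (\<Sum>i<n. \<Sum>j<n. cnj (v i) * M i j * v j) in Im q = 0 \<and> Re q \<ge> 0)"

definition loewner_le :: "nat \<Rightarrow> cmat \<Rightarrow> cmat \<Rightarrow> bool" where
  "loewner_le n A B \<longleftrightarrow> psd n (\<lambda>i j. B i j - A i j)"

definition msmult :: "complex \<Rightarrow> cmat \<Rightarrow> cmat" where
  "msmult c A = (\<lambda>i j. c * A i j)"

definition kron :: "nat \<Rightarrow> cmat \<Rightarrow> cmat \<Rightarrow> cmat" where
  "kron m A B = (\<lambda>p q. A (p div m) (q div m) * B (p mod m) (q mod m))"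

definition ptrans :: "nat \<Rightarrow> cmat \<Rightarrow> cmat" where
  "ptrans b W = (\<lambda>p q. W ((p div b) * b + q mod b) ((q div b) * b + p mod b))"

text \<open>A linear map from a x a matrices to b x b matrices is given by the images
  U i j = N(|i><j|) of the matrix units (i, j < a); it acts by linear extension.\<close>
definition lmap_apply :: "nat \<Rightarrow> (nat \<Rightarrow> nat \<Rightarrow> cmat) \<Rightarrow> cmat \<Rightarrow> cmat" where
  "lmap_apply a U X = (\<lambda>x y. \<Sum>i<a. \<Sum>j<a. X i j * U i j x y)"

definition id_units :: "nat \<Rightarrow> nat \<Rightarrow> cmat" where
  "id_units i j = (\<lambda>x y. if x = i \<and> y = j then 1 else 0)"

definition tensor_map :: "nat \<Rightarrow> nat \<Rightarrow> (nat \<Rightarrow> nat \<Rightarrow> cmat) \<Rightarrow> (nat \<Rightarrow> nat \<Rightarrow> cmat)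
    \<Rightarrow> (nat \<Rightarrow> nat \<Rightarrow> cmat)" where
  "tensor_map c e U V = (\<lambda>p q. kron e (U (p div c) (q div c)) (V (p mod c) (q mod c)))"

definition positive_map :: "nat \<Rightarrow> nat \<Rightarrow> (nat \<Rightarrow> nat \<Rightarrow> cmat) \<Rightarrow> bool" where
  "positive_map a b U \<longleftrightarrow> (\<forall>X. psd a X \<longrightarrow> psd b (lmap_apply a U X))"

definition completely_positive :: "nat \<Rightarrow> nat \<Rightarrow> (nat \<Rightarrow> nat \<Rightarrow> cmat) \<Rightarrow> bool" where
  "completely_positive a b U \<longleftrightarrow>
     (\<forall>n. positive_map (n * a) (n * b) (tensor_map a b id_units U))"

definition trace_preserving :: "nat \<Rightarrow> nat \<Rightarrow> (nat \<Rightarrow> nat \<Rightarrow> cmat) \<Rightarrow> bool" where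
  "trace_preserving a b U \<longleftrightarrow> (\<forall>i<a. \<forall>j<a. trace b (U i j) = (if i = j then 1 else 0))"

definition quantum_channel :: "nat \<Rightarrow> nat \<Rightarrow> (nat \<Rightarrow> nat \<Rightarrow> cmat) \<Rightarrow> bool" where
  "quantum_channel a b U \<longleftrightarrow> 0 < a \<and> 0 < b \<and> completely_positive a b U \<and> trace_preserving a b U"

text \<open>Choi matrix J_AB = sum_{i,j} |i><j|_A \<otimes> N(|i><j|), dimension a * b.\<close>
definition choi :: "nat \<Rightarrow> (nat \<Rightarrow> nat \<Rightarrow> cmat) \<Rightarrow> cmat" where
  "choi b U = (\<lambda>p q. U (p div b) (q div b) (p mod b) (q mod b))"

definition pptp_feasible :: "nat \<Rightarrow> nat \<Rightarrow> real \<Rightarrow> cmat \<Rightarrow> cmat \<Rightarrow> bool" where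
  "pptp_feasible a b k \<rho> W \<longleftrightarrow>
     loewner_le (a * b) (\<lambda>_ _. 0) W \<and>
     loewner_le (a * b) W (kron b \<rho> (idm b)) \<and>
     trace a \<rho> = 1 \<and>
     loewner_le (a * b) (msmult (- complex_of_real (1 / k)) (kron b \<rho> (idm b))) (ptrans b W) \<and>
     loewner_le (a * b) (ptrans b W) (msmult (complex_of_real (1 / k)) (kron b \<rho> (idm b)))"

definition F_pptp :: "nat \<Rightarrow> nat \<Rightarrow> (nat \<Rightarrow> nat \<Rightarrow> cmat) \<Rightarrow> real \<Rightarrow> real" where
  "F_pptp a b U k = Sup {Re (trace (a * b) (mmult (a * b) (choi b U) W)) | \<rho> W. pptp_feasible a b k \<rho> W}"

text \<open>kappa^{PPTp}(N) = max {k >= 0 : F^{PPTp}(N, k) = 1}; at k = 0 the PPT constraint is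
  vacuous (1/k = infinity), so F^{PPTp}(N, 0) = 1 by convention.\<close>
definition kappa_pptp :: "nat \<Rightarrow> nat \<Rightarrow> (nat \<Rightarrow> nat \<Rightarrow> cmat) \<Rightarrow> real" where
  "kappa_pptp a b U = (GREATEST k. 0 \<le> k \<and> (k = 0 \<or> F_pptp a b U k = 1))"

end

theory Submission
  imports Defs "HOL-Library.Complex_Order"
begin

text \<open>For k > 0 the feasible points of the two programs correspond, with equal objective values.
  A feasible pair (\<rho>, W) for N gives (\<rho> \<otimes> 1/d, W \<otimes> Phi/d^2) for N \<otimes> I_d at parameter k d, where
  Phi is the unnormalised maximally entangled projector on the two d-dimensional systems A2, B2;
  conversely a feasible pair for N \<otimes> I_d is sent to (tr_A2 \<rho>, (1 \<otimes> \<langle>Phi|) W (1 \<otimes> |Phi\<rangle>)).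
  The Choi matrix of N \<otimes> I_d is J \<otimes> Phi, which makes the objective values agree, and the
  partial-transpose constraints transfer because the partial transpose of Phi is the swap F:
  X \<plusminus> Y \<ge> 0 implies X \<otimes> 1 \<plusminus> Y \<otimes> F \<ge> 0. Hence F(N \<otimes> I_d, k d) = F(N, k).
  For kappa, the set of k with F(N, k) = 1 has a largest element, because F is antitone,
  k F(k) is monotone and F(k) \<le> C/k; rescaling k by d then rescales kappa.\<close>

section \<open>Quadratic forms\<close>

text \<open>With the order of Complex_Order, 0 \<le> z means that z is a nonnegative real, so psd and
  the Loewner order become inequalities between the values of the form sesq.\<close>

lemma complex_half_nonneg: "0 \<le> 2 * (z::complex) \<Longrightarrow> 0 \<le> z"
  unfolding less_eq_complex_def by simp

lemma neg_le_iff_add_nonneg: "- x \<le> y \<longleftrightarrow> 0 \<le> x + (y::'a::ordered_ab_group_add)"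
  by (metis add.commute diff_ge_0_iff_ge diff_minus_eq_add)

lemma complex_of_real_nonneg [simp]: "0 \<le> complex_of_real r \<longleftrightarrow> 0 \<le> r"
  unfolding less_eq_complex_def by simp

definition sesq :: "nat \<Rightarrow> cmat \<Rightarrow> (nat \<Rightarrow> complex) \<Rightarrow> (nat \<Rightarrow> complex) \<Rightarrow> complex" where
  "sesq n M x y = (\<Sum>p<n. \<Sum>q<n. cnj (x p) * M p q * y q)"

lemma psd_iff_sesq: "psd n M \<longleftrightarrow> (\<forall>v. 0 \<le> sesq n M v v)"
  unfolding psd_def sesq_def Let_def less_eq_complex_def by auto

lemma sesq_diff_mat: "sesq n (\<lambda>i j. A i j - B i j) x y = sesq n A x y - sesq n B x y"
  unfolding sesq_def by (simp add: algebra_simps sum_subtractf)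

lemma sesq_add_mat: "sesq n (\<lambda>i j. A i j + B i j) x y = sesq n A x y + sesq n B x y"
  unfolding sesq_def by (simp add: algebra_simps sum.distrib)

lemma sesq_scale_mat: "sesq n (\<lambda>i j. c * A i j) x y = c * sesq n A x y"
  unfolding sesq_def by (simp add: algebra_simps sum_distrib_left)

lemma sesq_msmult: "sesq n (msmult c A) x y = c * sesq n A x y"
  unfolding msmult_def by (rule sesq_scale_mat)

lemma sesq_zero_mat: "sesq n (\<lambda>_ _. 0) x y = 0"
  unfolding sesq_def by simp

lemma loewner_le_iff_sesq: "loewner_le n A B \<longleftrightarrow> (\<forall>v. sesq n A v v \<le> sesq n B v v)"
  unfolding loewner_le_def psd_iff_sesq sesq_diff_mat by simp

lemma sesq_add_left: "sesq n M (\<lambda>i. x i + y i) z = sesq n M x z + sesq n M y z"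
  unfolding sesq_def by (simp add: algebra_simps sum.distrib)

lemma sesq_add_right: "sesq n M z (\<lambda>i. x i + y i) = sesq n M z x + sesq n M z y"
  unfolding sesq_def by (simp add: algebra_simps sum.distrib)

lemma sesq_diff_left: "sesq n M (\<lambda>i. x i - y i) z = sesq n M x z - sesq n M y z"
  unfolding sesq_def by (simp add: algebra_simps sum_subtractf)

lemma sesq_diff_right: "sesq n M z (\<lambda>i. x i - y i) = sesq n M z x - sesq n M z y"
  unfolding sesq_def by (simp add: algebra_simps sum_subtractf)

lemma sesq_cong:
  "(\<And>p q. p < n \<Longrightarrow> q < n \<Longrightarrow> M p q = M' p q) \<Longrightarrow> (\<And>p. p < n \<Longrightarrow> x p = x' p) \<Longrightarrow>
    (\<And>p. p < n \<Longrightarrow> y p = y' p) \<Longrightarrow> sesq n M x y = sesq n M' x' y'"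
  unfolding sesq_def by (intro sum.cong refl) auto

lemma sesq_sum_vec:
  assumes "finite S" "finite T"
  shows "sesq n M (\<lambda>p. \<Sum>s\<in>S. x s p) (\<lambda>q. \<Sum>t\<in>T. y t q) = (\<Sum>s\<in>S. \<Sum>t\<in>T. sesq n M (x s) (y t))"
proof -
  have "sesq n M (\<lambda>p. \<Sum>s\<in>S. x s p) (\<lambda>q. \<Sum>t\<in>T. y t q)
     = (\<Sum>p<n. \<Sum>q<n. \<Sum>s\<in>S. \<Sum>t\<in>T. cnj (x s p) * M p q * y t q)"
    unfolding sesq_def
    by (intro sum.cong refl) (simp add: sum_distrib_left sum_distrib_right mult.assoc, rule sum.swap)
  also have "\<dots> = (\<Sum>p<n. \<Sum>s\<in>S. \<Sum>t\<in>T. \<Sum>q<n. cnj (x s p) * M p q * y t q)"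
    by (intro sum.cong refl) (subst sum.swap, intro sum.cong refl, rule sum.swap)
  also have "\<dots> = (\<Sum>s\<in>S. \<Sum>t\<in>T. \<Sum>p<n. \<Sum>q<n. cnj (x s p) * M p q * y t q)"
    by (subst sum.swap, intro sum.cong refl, rule sum.swap)
  finally show ?thesis unfolding sesq_def .
qed

lemma sesq_sum_mat:
  "sesq n (\<lambda>p q. \<Sum>s\<in>S. \<Sum>t\<in>T. G s t p q) x y = (\<Sum>s\<in>S. \<Sum>t\<in>T. sesq n (G s t) x y)"
proof -
  have "sesq n (\<lambda>p q. \<Sum>s\<in>S. \<Sum>t\<in>T. G s t p q) x y
     = (\<Sum>p<n. \<Sum>q<n. \<Sum>s\<in>S. \<Sum>t\<in>T. cnj (x p) * G s t p q * y q)"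
    unfolding sesq_def by (simp add: sum_distrib_left sum_distrib_right)
  also have "\<dots> = (\<Sum>p<n. \<Sum>s\<in>S. \<Sum>t\<in>T. \<Sum>q<n. cnj (x p) * G s t p q * y q)"
    by (intro sum.cong refl) (subst sum.swap, intro sum.cong refl, rule sum.swap)
  also have "\<dots> = (\<Sum>s\<in>S. \<Sum>t\<in>T. \<Sum>p<n. \<Sum>q<n. cnj (x p) * G s t p q * y q)"
    by (subst sum.swap, intro sum.cong refl, rule sum.swap)
  finally show ?thesis unfolding sesq_def .
qed

lemma psd_compress:
  assumes "psd N M" "finite I" "f ` I \<subseteq> {..<N}"
  shows "0 \<le> (\<Sum>x\<in>I. \<Sum>y\<in>I. cnj (c x) * M (f x) (f y) * c y)"
proof -
  define S where "S z = {x\<in>I. f x = z}" for z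
  define v where "v z = (\<Sum>x\<in>S z. c x)" for z
  define G where "G x y = cnj (c x) * M (f x) (f y) * c y" for x y
  have "cnj (v z) * M z z' * v z' = (\<Sum>x\<in>S z. \<Sum>y\<in>S z'. G x y)" for z z'
  proof -
    have "cnj (v z) * M z z' * v z' = (\<Sum>x\<in>S z. \<Sum>y\<in>S z'. cnj (c x) * M z z' * c y)"
      unfolding v_def by (simp add: sum_distrib_left sum_distrib_right) (rule sum.swap)
    also have "\<dots> = (\<Sum>x\<in>S z. \<Sum>y\<in>S z'. G x y)"
      by (intro sum.cong refl) (simp add: G_def S_def)
    finally show ?thesis .
  qed
  then have "sesq N M v v = (\<Sum>z<N. \<Sum>z'<N. \<Sum>x\<in>S z. \<Sum>y\<in>S z'. G x y)"
    unfolding sesq_def by simp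
  also have "\<dots> = (\<Sum>z<N. \<Sum>x\<in>S z. \<Sum>z'<N. \<Sum>y\<in>S z'. G x y)"
    by (intro sum.cong refl) (rule sum.swap)
  also have "\<dots> = (\<Sum>x\<in>I. \<Sum>y\<in>I. G x y)"
    unfolding S_def using assms by (simp add: sum.group)
  finally show ?thesis using assms(1) unfolding psd_iff_sesq G_def by metis
qed

lemma psd_diag_nonneg:
  assumes "psd n M" "i < n"
  shows "0 \<le> M i i"
  using psd_compress[OF assms(1), of "{i}" "\<lambda>x. x" "\<lambda>_. 1"] assms by simp

lemma psd_norm_entry_le:
  assumes "psd n M" "i < n" "j < n"
  shows "cmod (M i j) \<le> Re (M i i) + Re (M j j)"
proof (cases "i = j")
  case True
  then show ?thesis using psd_diag_nonneg[OF assms(1,2)]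
    by (simp add: cmod_eq_Re less_eq_complex_def)
next
  case False
  have unit: "0 \<le> M i i + M j j + w * M i j + cnj w * M j i" if "cmod w = 1" for w
  proof -
    let ?f = "\<lambda>b. if b then i else j" and ?c = "\<lambda>b. if b then 1 else w"
    have "cnj w * w = 1" using that
      by (metis complex_norm_square mult.commute of_real_1 power_one)
    then have "(\<Sum>x\<in>UNIV. \<Sum>y\<in>UNIV. cnj (?c x) * M (?f x) (?f y) * ?c y)
        = M i i + M j j + w * M i j + cnj w * M j i"
      by (simp add: UNIV_bool)
    moreover have "0 \<le> (\<Sum>x\<in>UNIV. \<Sum>y\<in>UNIV. cnj (?c x) * M (?f x) (?f y) * ?c y)"
      by (rule psd_compress[OF assms(1)]) (use assms in auto)
    ultimately show ?thesis by simp
  qed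
  have "\<bar>Re (M i j)\<bar> + \<bar>Im (M i j)\<bar> \<le> Re (M i i) + Re (M j j)"
    using unit[of 1] unit[of "-1"] unit[of \<i>] unit[of "-\<i>"]
      psd_diag_nonneg[OF assms(1,2)] psd_diag_nonneg[OF assms(1,3)]
    unfolding less_eq_complex_def by auto
  then show ?thesis using cmod_le[of "M i j"] by linarith
qed

text \<open>The operator inequality X \<otimes> 1 + Y \<otimes> F \<ge> 0, F the swap of C^d \<otimes> C^d, evaluated at the
  vector (SUM s t. w s t \<otimes> |s\<rangle>|t\<rangle>).\<close>
lemma psd_pm_swap_sum_nonneg:
  fixes w :: "nat \<Rightarrow> nat \<Rightarrow> nat \<Rightarrow> complex"
  assumes plus: "psd n (\<lambda>p q. X p q + Y p q)" and minus: "psd n (\<lambda>p q. X p q - Y p q)"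
  shows "0 \<le> (\<Sum>s<d. \<Sum>t<d. sesq n X (w s t) (w s t) + sesq n Y (w s t) (w t s))"
proof -
  define A where "A s t = sesq n X (w s t) (w s t)" for s t
  define B where "B s t = sesq n Y (w s t) (w t s)" for s t
  have split: "sesq n (\<lambda>p q. X p q + Y p q) (\<lambda>i. w s t i + w t s i) (\<lambda>i. w s t i + w t s i)
      + sesq n (\<lambda>p q. X p q - Y p q) (\<lambda>i. w s t i - w t s i) (\<lambda>i. w s t i - w t s i)
      = 2 * (A s t + A t s + B s t + B t s)" for s t
    unfolding A_def B_def sesq_add_mat sesq_diff_mat sesq_add_left sesq_add_right
      sesq_diff_left sesq_diff_right
    by (simp add: algebra_simps)
  have "0 \<le> 2 * (A s t + A t s + B s t + B t s)" for s t
    unfolding split[symmetric] using plus minus unfolding psd_iff_sesq by (intro add_nonneg_nonneg) auto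
  then have "0 \<le> (\<Sum>s<d. \<Sum>t<d. A s t + A t s + B s t + B t s)"
    by (intro sum_nonneg) (rule complex_half_nonneg)
  also have "\<dots> = 2 * (\<Sum>s<d. \<Sum>t<d. A s t + B s t)"
  proof -
    have "(\<Sum>s<d. \<Sum>t<d. A t s) = (\<Sum>s<d. \<Sum>t<d. A s t)"
      and "(\<Sum>s<d. \<Sum>t<d. B t s) = (\<Sum>s<d. \<Sum>t<d. B s t)"
      by (rule sum.swap)+
    then show ?thesis by (simp add: sum.distrib)
  qed
  finally show ?thesis unfolding A_def B_def by (rule complex_half_nonneg)
qed

lemma psd_pm_swap_sum_nonneg':
  fixes w :: "nat \<Rightarrow> nat \<Rightarrow> nat \<Rightarrow> complex"
  assumes "psd n (\<lambda>p q. X p q + Y p q)" and "psd n (\<lambda>p q. X p q - Y p q)"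
  shows "0 \<le> (\<Sum>s<d. \<Sum>t<d. sesq n X (w s t) (w s t) - sesq n Y (w s t) (w t s))"
proof -
  have "0 \<le> (\<Sum>s<d. \<Sum>t<d. sesq n X (w s t) (w s t) + sesq n (\<lambda>p q. - Y p q) (w s t) (w t s))"
    by (rule psd_pm_swap_sum_nonneg) (use assms in simp_all)
  moreover have "sesq n (\<lambda>p q. - Y p q) x y = - sesq n Y x y" for x y
    using sesq_scale_mat[of n "-1" Y x y] by simp
  ultimately show ?thesis by simp
qed

lemma psd_sesq_sum_le:
  assumes "psd n M"
  shows "sesq n M (\<lambda>p. \<Sum>s<d. x s p) (\<lambda>p. \<Sum>s<d. x s p) \<le> of_nat d * (\<Sum>s<d. sesq n M (x s) (x s))"
proof -
  define Q where "Q s t = sesq n M (x s) (x t)" for s t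
  have "0 \<le> (\<Sum>s<d. \<Sum>t<d. sesq n M (\<lambda>i. x s i - x t i) (\<lambda>i. x s i - x t i))"
    using assms unfolding psd_iff_sesq by (intro sum_nonneg) auto
  also have "\<dots> = (\<Sum>s<d. \<Sum>t<d. Q s s + Q t t - Q s t - Q t s)"
    unfolding sesq_diff_left sesq_diff_right Q_def by (simp add: algebra_simps)
  also have "\<dots> = 2 * (of_nat d * (\<Sum>s<d. Q s s) - (\<Sum>s<d. \<Sum>t<d. Q s t))"
  proof -
    have "(\<Sum>s<d. \<Sum>t<d. Q t s) = (\<Sum>s<d. \<Sum>t<d. Q s t)"
      by (rule sum.swap)
    then show ?thesis by (simp add: sum.distrib sum_subtractf sum_distrib_left algebra_simps)
  qed
  finally have "0 \<le> of_nat d * (\<Sum>s<d. Q s s) - (\<Sum>s<d. \<Sum>t<d. Q s t)"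
    by (rule complex_half_nonneg)
  moreover have "(\<Sum>s<d. \<Sum>t<d. Q s t) = sesq n M (\<lambda>p. \<Sum>s<d. x s p) (\<lambda>p. \<Sum>s<d. x s p)"
    unfolding Q_def by (rule sesq_sum_vec[symmetric]) auto
  ultimately show ?thesis unfolding Q_def by simp
qed

lemma pptp_feasible_iff_sesq:
  "pptp_feasible a b k \<rho> W \<longleftrightarrow> trace a \<rho> = 1 \<and> (\<forall>v.
     0 \<le> sesq (a*b) W v v \<and> sesq (a*b) W v v \<le> sesq (a*b) (kron b \<rho> (idm b)) v v \<and>
     - (of_real (1/k) * sesq (a*b) (kron b \<rho> (idm b)) v v) \<le> sesq (a*b) (ptrans b W) v v \<and>
     sesq (a*b) (ptrans b W) v v \<le> of_real (1/k) * sesq (a*b) (kron b \<rho> (idm b)) v v)"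
  unfolding pptp_feasible_def loewner_le_iff_sesq sesq_msmult sesq_zero_mat by auto

lemma pptp_feasible_psd:
  assumes "pptp_feasible a b k \<rho> W"
  shows "psd (a*b) (kron b \<rho> (idm b))"
    and "psd (a*b) (\<lambda>p q. of_real (1/k) * kron b \<rho> (idm b) p q + ptrans b W p q)"
    and "psd (a*b) (\<lambda>p q. of_real (1/k) * kron b \<rho> (idm b) p q - ptrans b W p q)"
  using assms unfolding pptp_feasible_iff_sesq psd_iff_sesq sesq_add_mat sesq_diff_mat sesq_scale_mat
  by (auto intro: order_trans simp: neg_le_iff_add_nonneg)

section \<open>Indices of the doubled system\<close>

lemma sum_lessThan_mult:
  fixes h :: "nat \<Rightarrow> 'a::comm_monoid_add"
  shows "(\<Sum>p<m * n. h p) = (\<Sum>i<m. \<Sum>j<n. h (i * n + j))"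
proof (induction m)
  case (Suc m)
  have "{..<Suc m * n} = {..<m * n} \<union> {m * n..<m * n + n}" by auto
  then have "(\<Sum>p<Suc m * n. h p) = (\<Sum>p<m * n. h p) + (\<Sum>p\<in>{m * n..<m * n + n}. h p)"
    by (metis sum.union_disjoint finite_lessThan finite_atLeastLessThan ivl_disj_int(2) lessThan_atLeast0)
  also have "(\<Sum>p\<in>{m * n..<m * n + n}. h p) = (\<Sum>j<n. h (m * n + j))"
    using sum.shift_bounds_nat_ivl[of h 0 "m * n" n] by (simp add: atLeast0LessThan add.commute)
  finally show ?case using Suc by simp
qed simp

lemma mult_add_eq_iff:
  fixes d :: nat
  assumes "t < d" "t' < d"
  shows "x * d + t = y * d + t' \<longleftrightarrow> x = y \<and> t = t'"
proof
  assume "x * d + t = y * d + t'"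
  then have "(x * d + t) div d = (y * d + t') div d" "(x * d + t) mod d = (y * d + t') mod d"
    by simp_all
  then show "x = y \<and> t = t'" using assms by simp
qed auto

lemma sum_if_zero: "(\<Sum>x\<in>S. if P then f x else 0) = (if P then sum f S else 0)"
  by simp

lemma if_conj_zero: "(if P \<and> Q then x else 0) = (if P then if Q then x else 0 else 0)"
  by simp

text \<open>The index of |i\<rangle>|s\<rangle>|j\<rangle>|t\<rangle> in (A \<otimes> A2) \<otimes> (B \<otimes> B2), where p = i * b + j is the index
  of |i\<rangle>|j\<rangle> in A \<otimes> B and s, t < d are the digits of A2 and B2.\<close>
definition ext_index :: "nat \<Rightarrow> nat \<Rightarrow> nat \<Rightarrow> nat \<Rightarrow> nat \<Rightarrow> nat" where
  "ext_index b d p s t = ((p div b) * d + s) * (b * d) + (p mod b) * d + t"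

lemma ext_index_decode:
  assumes "0 < b" "s < d" "t < d"
  shows "ext_index b d p s t div (b * d) = (p div b) * d + s"
    and "ext_index b d p s t mod (b * d) = (p mod b) * d + t"
proof -
  have "p mod b + 1 \<le> b" using assms(1) by (simp add: Suc_leI)
  then have "(p mod b + 1) * d \<le> b * d" by (rule mult_right_mono) simp
  then have "(p mod b) * d + t < b * d" using assms(3) by (simp add: algebra_simps)
  moreover have "0 < b * d" using assms by simp
  ultimately
  show "ext_index b d p s t div (b * d) = (p div b) * d + s"
    and "ext_index b d p s t mod (b * d) = (p mod b) * d + t"
    unfolding ext_index_def by (simp_all add: add.assoc)
qed

lemma sum_ext_index:
  fixes h :: "nat \<Rightarrow> 'a::comm_monoid_add"
  assumes "0 < b"
  shows "(\<Sum>P<(a*d)*(b*d). h P) = (\<Sum>s<d. \<Sum>t<d. \<Sum>p<a*b. h (ext_index b d p s t))"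
proof -
  have "(\<Sum>P<(a*d)*(b*d). h P) = (\<Sum>i<a. \<Sum>s<d. \<Sum>j<b. \<Sum>t<d. h ((i*d+s)*(b*d)+(j*d+t)))"
    by (simp only: sum_lessThan_mult)
  also have "\<dots> = (\<Sum>s<d. \<Sum>t<d. \<Sum>i<a. \<Sum>j<b. h ((i*d+s)*(b*d)+(j*d+t)))"
  proof -
    have "(\<Sum>i<a. \<Sum>s<d. \<Sum>j<b. \<Sum>t<d. h ((i*d+s)*(b*d)+(j*d+t)))
        = (\<Sum>s<d. \<Sum>i<a. \<Sum>j<b. \<Sum>t<d. h ((i*d+s)*(b*d)+(j*d+t)))"
      by (rule sum.swap)
    also have "\<dots> = (\<Sum>s<d. \<Sum>i<a. \<Sum>t<d. \<Sum>j<b. h ((i*d+s)*(b*d)+(j*d+t)))"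
      by (rule sum.cong[OF refl], rule sum.cong[OF refl], rule sum.swap)
    also have "\<dots> = (\<Sum>s<d. \<Sum>t<d. \<Sum>i<a. \<Sum>j<b. h ((i*d+s)*(b*d)+(j*d+t)))"
      by (rule sum.cong[OF refl], rule sum.swap)
    finally show ?thesis .
  qed
  also have "\<dots> = (\<Sum>s<d. \<Sum>t<d. \<Sum>i<a. \<Sum>j<b. h (ext_index b d (i*b+j) s t))"
    using assms by (intro sum.cong refl) (simp add: ext_index_def add.assoc)
  also have "\<dots> = (\<Sum>s<d. \<Sum>t<d. \<Sum>p<a*b. h (ext_index b d p s t))"
    by (simp only: sum_lessThan_mult)
  finally show ?thesis .
qed

lemma sum2_ext_index:
  fixes F :: "nat \<Rightarrow> nat \<Rightarrow> 'a::comm_monoid_add"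
  assumes "0 < b"
  shows "(\<Sum>P<(a*d)*(b*d). \<Sum>Q<(a*d)*(b*d). F P Q) =
    (\<Sum>s<d. \<Sum>t<d. \<Sum>s'<d. \<Sum>t'<d. \<Sum>p<a*b. \<Sum>q<a*b.
       F (ext_index b d p s t) (ext_index b d q s' t'))"
proof -
  have "(\<Sum>P<(a*d)*(b*d). \<Sum>Q<(a*d)*(b*d). F P Q) =
     (\<Sum>s<d. \<Sum>t<d. \<Sum>p<a*b. \<Sum>s'<d. \<Sum>t'<d. \<Sum>q<a*b.
       F (ext_index b d p s t) (ext_index b d q s' t'))"
    by (simp only: sum_ext_index[OF assms])
  also have "\<dots> = (\<Sum>s<d. \<Sum>t<d. \<Sum>s'<d. \<Sum>p<a*b. \<Sum>t'<d. \<Sum>q<a*b.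
       F (ext_index b d p s t) (ext_index b d q s' t'))"
    by (rule sum.cong[OF refl], rule sum.cong[OF refl], rule sum.swap)
  also have "\<dots> = (\<Sum>s<d. \<Sum>t<d. \<Sum>s'<d. \<Sum>t'<d. \<Sum>p<a*b. \<Sum>q<a*b.
       F (ext_index b d p s t) (ext_index b d q s' t'))"
    by (rule sum.cong[OF refl], rule sum.cong[OF refl], rule sum.cong[OF refl], rule sum.swap)
  finally show ?thesis .
qed

lemma sesq_ext_index:
  assumes "0 < b"
  shows "sesq ((a*d)*(b*d)) M v w =
    (\<Sum>s<d. \<Sum>t<d. \<Sum>s'<d. \<Sum>t'<d.
       sesq (a*b) (\<lambda>p q. M (ext_index b d p s t) (ext_index b d q s' t'))
         (\<lambda>p. v (ext_index b d p s t)) (\<lambda>q. w (ext_index b d q s' t')))"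
  unfolding sesq_def by (rule sum2_ext_index[OF assms])

lemma trace_mmult_ext_index:
  assumes "0 < b"
  shows "trace ((a*d)*(b*d)) (mmult ((a*d)*(b*d)) A B) =
    (\<Sum>s<d. \<Sum>t<d. \<Sum>s'<d. \<Sum>t'<d. \<Sum>p<a*b. \<Sum>q<a*b.
       A (ext_index b d p s t) (ext_index b d q s' t') * B (ext_index b d q s' t') (ext_index b d p s t))"
  unfolding trace_def mmult_def by (rule sum2_ext_index[OF assms])

lemma trace_mmult: "trace n (mmult n A B) = (\<Sum>p<n. \<Sum>q<n. A p q * B q p)"
  unfolding trace_def mmult_def ..

lemma sesq_ext_index_if:
  assumes "0 < b"
    and "\<And>p q s t s' t'. s < d \<Longrightarrow> t < d \<Longrightarrow> s' < d \<Longrightarrow> t' < d \<Longrightarrow>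
       M' (ext_index b d p s t) (ext_index b d q s' t') = (if C s t s' t' then c * M p q else 0)"
  shows "sesq ((a*d)*(b*d)) M' v v' = (\<Sum>s<d. \<Sum>t<d. \<Sum>s'<d. \<Sum>t'<d.
     if C s t s' t' then
       c * sesq (a*b) M (\<lambda>p. v (ext_index b d p s t)) (\<lambda>p. v' (ext_index b d p s' t'))
     else 0)"
  unfolding sesq_ext_index[OF assms(1)]
proof (intro sum.cong refl)
  fix s t s' t' assume "s \<in> {..<d}" "t \<in> {..<d}" "s' \<in> {..<d}" "t' \<in> {..<d}"
  then have "sesq (a*b) (\<lambda>p q. M' (ext_index b d p s t) (ext_index b d q s' t')) x y
     = sesq (a*b) (\<lambda>p q. if C s t s' t' then c * M p q else 0) x y" for x y
    by (intro sesq_cong) (simp_all add: assms(2))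
  then show "sesq (a*b) (\<lambda>p q. M' (ext_index b d p s t) (ext_index b d q s' t'))
      (\<lambda>p. v (ext_index b d p s t)) (\<lambda>q. v' (ext_index b d q s' t'))
    = (if C s t s' t' then
       c * sesq (a*b) M (\<lambda>p. v (ext_index b d p s t)) (\<lambda>p. v' (ext_index b d p s' t')) else 0)"
    by (cases "C s t s' t'") (simp_all add: sesq_scale_mat sesq_zero_mat)
qed

lemma choi_tensor_id_ext_index:
  assumes "0 < b" "s < d" "t < d" "s' < d" "t' < d"
  shows "choi (b*d) (tensor_map d d U id_units) (ext_index b d p s t) (ext_index b d q s' t') =
     (if t = s \<and> t' = s' then choi b U p q else 0)"
  unfolding choi_def tensor_map_def kron_def id_units_def
  using assms by (simp add: ext_index_decode)

lemma kron_idm_ext_index: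
  assumes "0 < b" "s < d" "t < d" "s' < d" "t' < d"
  shows "kron (b*d) R (idm (b*d)) (ext_index b d p s t) (ext_index b d q s' t') =
     (if p mod b = q mod b \<and> t = t' then R (p div b * d + s) (q div b * d + s') else 0)"
  unfolding kron_def idm_def
  using assms by (simp add: ext_index_decode mult_add_eq_iff)

lemma ptrans_ext_index:
  assumes "0 < b" "s < d" "t < d" "s' < d" "t' < d"
  shows "ptrans (b*d) W (ext_index b d p s t) (ext_index b d q s' t') =
     W (ext_index b d (p div b * b + q mod b) s t') (ext_index b d (q div b * b + p mod b) s' t)"
  unfolding ptrans_def ext_index_decode[OF assms(1,2,3)] ext_index_decode[OF assms(1,4,5)]
  using assms by (simp add: ext_index_def algebra_simps)

section \<open>From N to N \<otimes> I_d\<close>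

definition tensor_mixed :: "nat \<Rightarrow> cmat \<Rightarrow> cmat" where
  "tensor_mixed d \<rho> = msmult (1 / of_nat d) (kron d \<rho> (idm d))"

text \<open>W \<otimes> Phi / d^2, where Phi = (SUM s t. |s s><t t|) is the unnormalised maximally entangled
  projector on A2 \<otimes> B2; an index x of (A \<otimes> A2) \<otimes> (B \<otimes> B2) has its A2 digit
  x div (b*d) mod d and its B2 digit x mod (b*d) mod d.\<close>
definition phi_tensor :: "nat \<Rightarrow> nat \<Rightarrow> cmat \<Rightarrow> cmat" where
  "phi_tensor b d W = (\<lambda>x y.
     if x div (b*d) mod d = x mod (b*d) mod d \<and> y div (b*d) mod d = y mod (b*d) mod d
     then W (x div (b*d) div d * b + x mod (b*d) div d) (y div (b*d) div d * b + y mod (b*d) div d)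
            / (of_nat d)^2
     else 0)"

lemma phi_tensor_ext_index:
  assumes "0 < b" "s < d" "t < d" "s' < d" "t' < d"
  shows "phi_tensor b d W (ext_index b d p s t) (ext_index b d q s' t') =
    (if t = s \<and> t' = s' then of_real (1 / real d ^ 2) * W p q else 0)"
  using assms unfolding phi_tensor_def ext_index_decode[OF assms(1,2,3)] ext_index_decode[OF assms(1,4,5)]
  by (auto simp: divide_inverse mult.commute)

lemma kron_tensor_mixed_ext_index:
  assumes "0 < b" "s < d" "t < d" "s' < d" "t' < d"
  shows "kron (b*d) (tensor_mixed d \<rho>) (idm (b*d)) (ext_index b d p s t) (ext_index b d q s' t') =
    (if s' = s \<and> t' = t then of_real (1 / real d) * kron b \<rho> (idm b) p q else 0)"
  unfolding kron_idm_ext_index[OF assms] tensor_mixed_def msmult_def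
  using assms by (auto simp: kron_def idm_def)

lemma ptrans_phi_tensor_ext_index:
  assumes "0 < b" "s < d" "t < d" "s' < d" "t' < d"
  shows "ptrans (b*d) (phi_tensor b d W) (ext_index b d p s t) (ext_index b d q s' t') =
    (if s' = t \<and> t' = s then of_real (1 / real d ^ 2) * ptrans b W p q else 0)"
  unfolding ptrans_ext_index[OF assms] phi_tensor_ext_index[OF assms(1,2,5,4,3)]
  by (auto simp: ptrans_def)

lemma sesq_phi_tensor:
  assumes "0 < b"
  shows "sesq ((a*d)*(b*d)) (phi_tensor b d W) v v = of_real (1 / real d ^ 2) *
    sesq (a*b) W (\<lambda>p. \<Sum>s<d. v (ext_index b d p s s)) (\<lambda>p. \<Sum>s<d. v (ext_index b d p s s))"
  by (subst sesq_ext_index_if[where C = "\<lambda>s t s' t'. t = s \<and> t' = s'", OF assms phi_tensor_ext_index[OF assms]])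
    (simp_all add: if_conj_zero sum_if_zero sesq_sum_vec sum_distrib_left)

lemma sesq_kron_tensor_mixed:
  assumes "0 < b"
  shows "sesq ((a*d)*(b*d)) (kron (b*d) (tensor_mixed d \<rho>) (idm (b*d))) v v = of_real (1 / real d) *
    (\<Sum>s<d. \<Sum>t<d. sesq (a*b) (kron b \<rho> (idm b))
       (\<lambda>p. v (ext_index b d p s t)) (\<lambda>p. v (ext_index b d p s t)))"
  by (subst sesq_ext_index_if[where C = "\<lambda>s t s' t'. s' = s \<and> t' = t", OF assms kron_tensor_mixed_ext_index[OF assms]])
    (simp_all add: if_conj_zero sum_if_zero sum_distrib_left)

lemma sesq_ptrans_phi_tensor:
  assumes "0 < b"
  shows "sesq ((a*d)*(b*d)) (ptrans (b*d) (phi_tensor b d W)) v v = of_real (1 / real d ^ 2) *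
    (\<Sum>s<d. \<Sum>t<d. sesq (a*b) (ptrans b W)
       (\<lambda>p. v (ext_index b d p s t)) (\<lambda>p. v (ext_index b d p t s)))"
  by (subst sesq_ext_index_if[where C = "\<lambda>s t s' t'. s' = t \<and> t' = s", OF assms ptrans_phi_tensor_ext_index[OF assms]])
    (simp_all add: if_conj_zero sum_if_zero sum_distrib_left)

lemma trace_tensor_mixed:
  assumes "0 < d"
  shows "trace (a*d) (tensor_mixed d \<rho>) = trace a \<rho>"
proof -
  have "trace (a*d) (tensor_mixed d \<rho>) = (\<Sum>i<a. \<Sum>s<d. \<rho> i i / of_nat d)"
    unfolding trace_def sum_lessThan_mult
    by (intro sum.cong refl) (simp add: tensor_mixed_def msmult_def kron_def idm_def)
  then show ?thesis using assms unfolding trace_def by simp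
qed

lemma trace_choi_phi_tensor:
  assumes "0 < b" "0 < d"
  shows "trace ((a*d)*(b*d)) (mmult ((a*d)*(b*d)) (choi (b*d) (tensor_map d d U id_units)) (phi_tensor b d W))
       = trace (a*b) (mmult (a*b) (choi b U) W)"
proof -
  have "trace ((a*d)*(b*d)) (mmult ((a*d)*(b*d)) (choi (b*d) (tensor_map d d U id_units)) (phi_tensor b d W))
     = (\<Sum>s<d. \<Sum>t<d. \<Sum>s'<d. \<Sum>t'<d. if t = s \<and> t' = s' then
          of_real (1 / real d ^ 2) * (\<Sum>p<a*b. \<Sum>q<a*b. choi b U p q * W q p) else 0)"
    unfolding trace_mmult_ext_index[OF assms(1)]
    by (intro sum.cong refl)
      (auto simp: choi_tensor_id_ext_index[OF assms(1)] phi_tensor_ext_index[OF assms(1)] sum_distrib_left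
        mult.left_commute)
  also have "\<dots> = (\<Sum>p<a*b. \<Sum>q<a*b. choi b U p q * W q p)"
    using assms by (simp add: if_conj_zero sum_if_zero power2_eq_square)
  finally show ?thesis unfolding trace_mmult .
qed

lemma sesq_phi_tensor_le_kron_tensor_mixed:
  assumes b: "0 < b" and d: "0 < d"
    and K: "psd (a*b) (kron b \<rho> (idm b))"
    and WK: "\<And>v. sesq (a*b) W v v \<le> sesq (a*b) (kron b \<rho> (idm b)) v v"
  shows "sesq ((a*d)*(b*d)) (phi_tensor b d W) v v
    \<le> sesq ((a*d)*(b*d)) (kron (b*d) (tensor_mixed d \<rho>) (idm (b*d))) v v"
proof -
  let ?K = "kron b \<rho> (idm b)" and ?c = "complex_of_real (1 / real d ^ 2)"
  define w :: "nat \<Rightarrow> nat \<Rightarrow> nat \<Rightarrow> complex" where "w s t = (\<lambda>p. v (ext_index b d p s t))" for s t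
  have c: "0 \<le> ?c"
    by (simp only: complex_of_real_nonneg) simp
  have "(\<Sum>s<d. sesq (a*b) ?K (w s s) (w s s)) \<le> (\<Sum>s<d. \<Sum>t<d. sesq (a*b) ?K (w s t) (w s t))"
    using K unfolding psd_iff_sesq by (intro sum_mono member_le_sum) auto
  then have diag_le: "of_nat d * (\<Sum>s<d. sesq (a*b) ?K (w s s) (w s s))
      \<le> of_nat d * (\<Sum>s<d. \<Sum>t<d. sesq (a*b) ?K (w s t) (w s t))"
    by (rule mult_left_mono) (simp add: less_eq_complex_def)
  have "sesq ((a*d)*(b*d)) (phi_tensor b d W) v v = ?c * sesq (a*b) W (\<lambda>p. \<Sum>s<d. w s s p) (\<lambda>p. \<Sum>s<d. w s s p)"
    unfolding w_def by (rule sesq_phi_tensor[OF b])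
  also have "\<dots> \<le> ?c * sesq (a*b) ?K (\<lambda>p. \<Sum>s<d. w s s p) (\<lambda>p. \<Sum>s<d. w s s p)"
    by (intro mult_left_mono WK c)
  also have "\<dots> \<le> ?c * (of_nat d * (\<Sum>s<d. \<Sum>t<d. sesq (a*b) ?K (w s t) (w s t)))"
    by (intro mult_left_mono c order_trans[OF psd_sesq_sum_le[OF K] diag_le])
  also have "\<dots> = sesq ((a*d)*(b*d)) (kron (b*d) (tensor_mixed d \<rho>) (idm (b*d))) v v"
    using d unfolding sesq_kron_tensor_mixed[OF b] w_def
    by (simp add: power2_eq_square mult.assoc[symmetric])
  finally show ?thesis .
qed

lemma sesq_ptrans_phi_tensor_bounds:
  assumes b: "0 < b" and d: "0 < d" and k: "0 < k"
    and plus: "psd (a*b) (\<lambda>p q. of_real (1/k) * kron b \<rho> (idm b) p q + ptrans b W p q)"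
    and minus: "psd (a*b) (\<lambda>p q. of_real (1/k) * kron b \<rho> (idm b) p q - ptrans b W p q)"
  shows "- (of_real (1 / (k * real d)) * sesq ((a*d)*(b*d)) (kron (b*d) (tensor_mixed d \<rho>) (idm (b*d))) v v)
      \<le> sesq ((a*d)*(b*d)) (ptrans (b*d) (phi_tensor b d W)) v v"
    and "sesq ((a*d)*(b*d)) (ptrans (b*d) (phi_tensor b d W)) v v
      \<le> of_real (1 / (k * real d)) * sesq ((a*d)*(b*d)) (kron (b*d) (tensor_mixed d \<rho>) (idm (b*d))) v v"
proof -
  let ?K = "kron b \<rho> (idm b)" and ?c = "complex_of_real (1 / real d ^ 2)"
  define w :: "nat \<Rightarrow> nat \<Rightarrow> nat \<Rightarrow> complex" where "w s t = (\<lambda>p. v (ext_index b d p s t))" for s t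
  have c: "0 \<le> ?c"
    by (simp only: complex_of_real_nonneg) simp
  have K: "of_real (1 / (k * real d)) * sesq ((a*d)*(b*d)) (kron (b*d) (tensor_mixed d \<rho>) (idm (b*d))) v v
      = ?c * (\<Sum>s<d. \<Sum>t<d. sesq (a*b) (\<lambda>p q. of_real (1/k) * ?K p q) (w s t) (w s t))"
    unfolding sesq_kron_tensor_mixed[OF b] sesq_scale_mat sum_distrib_left[symmetric] w_def using k d
    by (simp add: power2_eq_square field_simps)
  have Y: "sesq ((a*d)*(b*d)) (ptrans (b*d) (phi_tensor b d W)) v v
      = ?c * (\<Sum>s<d. \<Sum>t<d. sesq (a*b) (ptrans b W) (w s t) (w t s))"
    unfolding w_def by (rule sesq_ptrans_phi_tensor[OF b])
  have "0 \<le> ?c * (\<Sum>s<d. \<Sum>t<d.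
      sesq (a*b) (\<lambda>p q. of_real (1/k) * ?K p q) (w s t) (w s t) + sesq (a*b) (ptrans b W) (w s t) (w t s))"
    by (intro mult_nonneg_nonneg psd_pm_swap_sum_nonneg plus minus c)
  then show "- (of_real (1 / (k * real d)) * sesq ((a*d)*(b*d)) (kron (b*d) (tensor_mixed d \<rho>) (idm (b*d))) v v)
      \<le> sesq ((a*d)*(b*d)) (ptrans (b*d) (phi_tensor b d W)) v v"
    unfolding K Y neg_le_iff_add_nonneg by (simp add: sum.distrib distrib_left)
  have "0 \<le> ?c * (\<Sum>s<d. \<Sum>t<d.
      sesq (a*b) (\<lambda>p q. of_real (1/k) * ?K p q) (w s t) (w s t) - sesq (a*b) (ptrans b W) (w s t) (w t s))"
    by (intro mult_nonneg_nonneg psd_pm_swap_sum_nonneg' plus minus c)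
  then show "sesq ((a*d)*(b*d)) (ptrans (b*d) (phi_tensor b d W)) v v
      \<le> of_real (1 / (k * real d)) * sesq ((a*d)*(b*d)) (kron (b*d) (tensor_mixed d \<rho>) (idm (b*d))) v v"
    unfolding K Y by (simp add: sum_subtractf right_diff_distrib)
qed

lemma pptp_feasible_phi_tensor:
  assumes b: "0 < b" and d: "0 < d" and k: "0 < k" and F: "pptp_feasible a b k \<rho> W"
  shows "pptp_feasible (a*d) (b*d) (k * real d) (tensor_mixed d \<rho>) (phi_tensor b d W)"
  unfolding pptp_feasible_iff_sesq
proof (intro conjI allI)
  show "trace (a*d) (tensor_mixed d \<rho>) = 1"
    using F trace_tensor_mixed[OF d] unfolding pptp_feasible_iff_sesq by simp
  fix v
  have "0 \<le> complex_of_real (1 / real d ^ 2)"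
    by (simp only: complex_of_real_nonneg) simp
  then show "0 \<le> sesq ((a*d)*(b*d)) (phi_tensor b d W) v v"
    unfolding sesq_phi_tensor[OF b] using F unfolding pptp_feasible_iff_sesq
    by (intro mult_nonneg_nonneg) auto
  show "sesq ((a*d)*(b*d)) (phi_tensor b d W) v v
      \<le> sesq ((a*d)*(b*d)) (kron (b*d) (tensor_mixed d \<rho>) (idm (b*d))) v v"
    using F unfolding pptp_feasible_iff_sesq
    by (intro sesq_phi_tensor_le_kron_tensor_mixed[OF b d pptp_feasible_psd(1)[OF F]]) simp
qed (use sesq_ptrans_phi_tensor_bounds[OF b d k pptp_feasible_psd(2,3)[OF F]] in simp_all)

section \<open>From N \<otimes> I_d to N\<close>

definition ptrace :: "nat \<Rightarrow> cmat \<Rightarrow> cmat" where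
  "ptrace d R = (\<lambda>i j. \<Sum>s<d. R (i*d+s) (j*d+s))"

text \<open>(1 \<otimes> \<langle>Phi|) W (1 \<otimes> |Phi\<rangle>) with |Phi\<rangle> = (SUM s. |s s\<rangle>) on A2 \<otimes> B2.\<close>
definition phi_compress :: "nat \<Rightarrow> nat \<Rightarrow> cmat \<Rightarrow> cmat" where
  "phi_compress b d W = (\<lambda>p q. \<Sum>s<d. \<Sum>t<d. W (ext_index b d p s s) (ext_index b d q t t))"

text \<open>The vector x \<otimes> |s0\<rangle> \<otimes> |t0\<rangle>, with |s0\<rangle> in A2 and |t0\<rangle> in B2.\<close>
definition tensor_basis :: "nat \<Rightarrow> nat \<Rightarrow> nat \<Rightarrow> nat \<Rightarrow> (nat \<Rightarrow> complex) \<Rightarrow> nat \<Rightarrow> complex" where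
  "tensor_basis b d s0 t0 x = (\<lambda>y. if y div (b*d) mod d = s0 \<and> y mod (b*d) mod d = t0
      then x (y div (b*d) div d * b + y mod (b*d) div d) else 0)"

lemma tensor_basis_ext_index:
  assumes "0 < b" "s < d" "t < d"
  shows "tensor_basis b d s0 t0 x (ext_index b d p s t) = (if s = s0 \<and> t = t0 then x p else 0)"
  using assms unfolding tensor_basis_def ext_index_decode[OF assms] by simp

lemma sesq_tensor_basis:
  assumes b: "0 < b" and "s0 < d" "t0 < d" "s1 < d" "t1 < d"
  shows "sesq ((a*d)*(b*d)) M (tensor_basis b d s0 t0 x) (tensor_basis b d s1 t1 y) =
    sesq (a*b) (\<lambda>p q. M (ext_index b d p s0 t0) (ext_index b d q s1 t1)) x y"
proof -
  have "sesq ((a*d)*(b*d)) M (tensor_basis b d s0 t0 x) (tensor_basis b d s1 t1 y) =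
    (\<Sum>s<d. \<Sum>t<d. \<Sum>s'<d. \<Sum>t'<d. if s = s0 \<and> t = t0 \<and> s' = s1 \<and> t' = t1 then
       sesq (a*b) (\<lambda>p q. M (ext_index b d p s t) (ext_index b d q s' t')) x y else 0)"
    unfolding sesq_ext_index[OF b]
    by (intro sum.cong refl) (auto simp: tensor_basis_ext_index[OF b] sesq_def)
  also have "\<dots> = sesq (a*b) (\<lambda>p q. M (ext_index b d p s0 t0) (ext_index b d q s1 t1)) x y"
    using assms by (simp add: if_conj_zero sum_if_zero)
  finally show ?thesis .
qed

lemma sesq_phi_compress:
  assumes "0 < b"
  shows "sesq (a*b) (phi_compress b d W) x x = sesq ((a*d)*(b*d)) W
    (\<lambda>y. \<Sum>s<d. tensor_basis b d s s x y) (\<lambda>y. \<Sum>s<d. tensor_basis b d s s x y)"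
  unfolding sesq_sum_vec[OF finite_lessThan finite_lessThan] phi_compress_def sesq_sum_mat
  by (intro sum.cong refl) (simp add: sesq_tensor_basis[OF assms])

lemma trace_ptrace: "trace a (ptrace d R) = trace (a*d) R"
  unfolding trace_def ptrace_def by (rule sum_lessThan_mult[symmetric])

lemma kron_ptrace_eq_phi_compress:
  assumes "0 < b" "0 < d"
  shows "kron b (ptrace d R) (idm b) p q = phi_compress b d (kron (b*d) R (idm (b*d))) p q"
  using assms by (simp add: phi_compress_def kron_idm_ext_index if_conj_zero sum_if_zero)
    (simp add: kron_def idm_def ptrace_def)

lemma sum_kron_idm_ext_index:
  assumes "0 < b"
  shows "(\<Sum>s<d. \<Sum>t<d. kron (b*d) R (idm (b*d)) (ext_index b d p s t) (ext_index b d q s t))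
    = of_nat d * kron b (ptrace d R) (idm b) p q"
proof -
  have "(\<Sum>s<d. \<Sum>t<d. kron (b*d) R (idm (b*d)) (ext_index b d p s t) (ext_index b d q s t))
      = (\<Sum>s<d. \<Sum>t<d. if p mod b = q mod b then R (p div b * d + s) (q div b * d + s) else 0)"
    by (intro sum.cong refl) (simp add: kron_idm_ext_index[OF assms])
  then show ?thesis by (simp add: kron_def idm_def ptrace_def sum_distrib_left)
qed

lemma ptrans_phi_compress:
  assumes "0 < b"
  shows "ptrans b (phi_compress b d W) p q =
    (\<Sum>s<d. \<Sum>t<d. ptrans (b*d) W (ext_index b d p s t) (ext_index b d q t s))"
  unfolding ptrans_def[of b] phi_compress_def
  by (intro sum.cong refl) (simp add: ptrans_ext_index[OF assms])

lemma trace_choi_phi_compress: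
  assumes b: "0 < b"
  shows "trace ((a*d)*(b*d)) (mmult ((a*d)*(b*d)) (choi (b*d) (tensor_map d d U id_units)) W)
       = trace (a*b) (mmult (a*b) (choi b U) (phi_compress b d W))"
proof -
  let ?G = "\<lambda>s s' p q. choi b U p q * W (ext_index b d q s' s') (ext_index b d p s s)"
  have "trace ((a*d)*(b*d)) (mmult ((a*d)*(b*d)) (choi (b*d) (tensor_map d d U id_units)) W)
     = (\<Sum>s<d. \<Sum>t<d. \<Sum>s'<d. \<Sum>t'<d. if t = s \<and> t' = s' then
          (\<Sum>p<a*b. \<Sum>q<a*b. choi b U p q * W (ext_index b d q s' t') (ext_index b d p s t)) else 0)"
    unfolding trace_mmult_ext_index[OF b]
    by (intro sum.cong refl) (auto simp: choi_tensor_id_ext_index[OF b])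
  also have "\<dots> = (\<Sum>s<d. \<Sum>s'<d. \<Sum>p<a*b. \<Sum>q<a*b. ?G s s' p q)"
    by (simp add: if_conj_zero sum_if_zero)
  also have "\<dots> = (\<Sum>s<d. \<Sum>p<a*b. \<Sum>s'<d. \<Sum>q<a*b. ?G s s' p q)"
    by (rule sum.cong[OF refl], rule sum.swap)
  also have "\<dots> = (\<Sum>p<a*b. \<Sum>q<a*b. \<Sum>s<d. \<Sum>s'<d. ?G s s' p q)"
    by (subst sum.swap) (rule sum.cong[OF refl], subst sum.swap, rule sum.cong[OF refl], rule sum.swap)
  also have "\<dots> = (\<Sum>p<a*b. \<Sum>q<a*b. choi b U p q * phi_compress b d W q p)"
    unfolding phi_compress_def sum_distrib_left
    by (rule sum.cong[OF refl], rule sum.cong[OF refl], rule sum.swap)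
  finally show ?thesis unfolding trace_mmult .
qed

lemma sesq_kron_ptrace:
  assumes b: "0 < b" and d: "0 < d"
  shows "sesq (a*b) (kron b (ptrace d R) (idm b)) x x = sesq ((a*d)*(b*d)) (kron (b*d) R (idm (b*d)))
    (\<lambda>y. \<Sum>s<d. tensor_basis b d s s x y) (\<lambda>y. \<Sum>s<d. tensor_basis b d s s x y)"
proof -
  have "sesq (a*b) (kron b (ptrace d R) (idm b)) x x = sesq (a*b) (phi_compress b d (kron (b*d) R (idm (b*d)))) x x"
    by (intro sesq_cong) (simp_all add: kron_ptrace_eq_phi_compress[OF b d])
  then show ?thesis unfolding sesq_phi_compress[OF b] .
qed

lemma sum_sesq_kron_tensor_basis:
  assumes b: "0 < b"
  shows "(\<Sum>s<d. \<Sum>t<d. sesq ((a*d)*(b*d)) (kron (b*d) R (idm (b*d))) (tensor_basis b d s t x) (tensor_basis b d s t x))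
    = of_nat d * sesq (a*b) (kron b (ptrace d R) (idm b)) x x"
proof -
  have "(\<Sum>s<d. \<Sum>t<d. sesq ((a*d)*(b*d)) (kron (b*d) R (idm (b*d))) (tensor_basis b d s t x) (tensor_basis b d s t x))
      = sesq (a*b) (\<lambda>p q. \<Sum>s<d. \<Sum>t<d. kron (b*d) R (idm (b*d)) (ext_index b d p s t) (ext_index b d q s t)) x x"
    unfolding sesq_sum_mat by (simp add: sesq_tensor_basis[OF b])
  then show ?thesis unfolding sum_kron_idm_ext_index[OF b] sesq_scale_mat .
qed

lemma sum_sesq_ptrans_tensor_basis:
  assumes b: "0 < b"
  shows "(\<Sum>s<d. \<Sum>t<d. sesq ((a*d)*(b*d)) (ptrans (b*d) W) (tensor_basis b d s t x) (tensor_basis b d t s x))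
    = sesq (a*b) (ptrans b (phi_compress b d W)) x x"
  unfolding ptrans_phi_compress[OF b] sesq_sum_mat by (simp add: sesq_tensor_basis[OF b])

lemma pptp_feasible_phi_compress:
  assumes b: "0 < b" and d: "0 < d" and k: "0 < k"
    and F: "pptp_feasible (a*d) (b*d) (k * real d) \<rho> W"
  shows "pptp_feasible a b k (ptrace d \<rho>) (phi_compress b d W)"
  unfolding pptp_feasible_iff_sesq
proof (intro conjI allI)
  let ?N = "(a*d)*(b*d)" and ?c = "complex_of_real (1 / (k * real d))"
  let ?K' = "kron (b*d) \<rho> (idm (b*d))" and ?Y' = "ptrans (b*d) W"
  let ?K = "kron b (ptrace d \<rho>) (idm b)"
  show "trace a (ptrace d \<rho>) = 1"
    using F unfolding pptp_feasible_iff_sesq trace_ptrace by simp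
  fix x
  show "0 \<le> sesq (a*b) (phi_compress b d W) x x" "sesq (a*b) (phi_compress b d W) x x \<le> sesq (a*b) ?K x x"
    using F unfolding pptp_feasible_iff_sesq sesq_phi_compress[OF b] sesq_kron_ptrace[OF b d] by simp_all
  let ?w = "\<lambda>s t. tensor_basis b d s t x"
  have K: "(\<Sum>s<d. \<Sum>t<d. sesq ?N (\<lambda>p q. ?c * ?K' p q) (?w s t) (?w s t)) = of_real (1/k) * sesq (a*b) ?K x x"
    unfolding sesq_scale_mat sum_distrib_left[symmetric] sum_sesq_kron_tensor_basis[OF b] using d by simp
  have "0 \<le> (\<Sum>s<d. \<Sum>t<d. sesq ?N (\<lambda>p q. ?c * ?K' p q) (?w s t) (?w s t) + sesq ?N ?Y' (?w s t) (?w t s))"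
    by (rule psd_pm_swap_sum_nonneg) (use pptp_feasible_psd[OF F] in simp_all)
  then show "- (of_real (1/k) * sesq (a*b) ?K x x) \<le> sesq (a*b) (ptrans b (phi_compress b d W)) x x"
    unfolding neg_le_iff_add_nonneg sum.distrib K sum_sesq_ptrans_tensor_basis[OF b] .
  have "0 \<le> (\<Sum>s<d. \<Sum>t<d. sesq ?N (\<lambda>p q. ?c * ?K' p q) (?w s t) (?w s t) - sesq ?N ?Y' (?w s t) (?w t s))"
    by (rule psd_pm_swap_sum_nonneg') (use pptp_feasible_psd[OF F] in simp_all)
  then show "sesq (a*b) (ptrans b (phi_compress b d W)) x x \<le> of_real (1/k) * sesq (a*b) ?K x x"
    unfolding sum_subtractf K sum_sesq_ptrans_tensor_basis[OF b] by simp
qed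

section \<open>The optimal value and kappa\<close>

definition pptp_values :: "nat \<Rightarrow> nat \<Rightarrow> (nat \<Rightarrow> nat \<Rightarrow> cmat) \<Rightarrow> real \<Rightarrow> real set" where
  "pptp_values a b U k =
     {Re (trace (a*b) (mmult (a*b) (choi b U) W)) | \<rho> W. pptp_feasible a b k \<rho> W}"

lemma F_pptp_eq_Sup: "F_pptp a b U k = Sup (pptp_values a b U k)"
  unfolding F_pptp_def pptp_values_def ..

lemma pptp_values_tensor_id:
  assumes b: "0 < b" and d: "0 < d" and k: "0 < k"
  shows "pptp_values (a*d) (b*d) (tensor_map d d U id_units) (k * real d) = pptp_values a b U k"
proof
  show "pptp_values (a*d) (b*d) (tensor_map d d U id_units) (k * real d) \<subseteq> pptp_values a b U k"
    unfolding pptp_values_def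
    using pptp_feasible_phi_compress[OF b d k] trace_choi_phi_compress[OF b] by fastforce
  show "pptp_values a b U k \<subseteq> pptp_values (a*d) (b*d) (tensor_map d d U id_units) (k * real d)"
  proof (intro subsetI)
    fix x assume "x \<in> pptp_values a b U k"
    then obtain \<rho> W where "pptp_feasible a b k \<rho> W"
      and "x = Re (trace (a*b) (mmult (a*b) (choi b U) W))"
      unfolding pptp_values_def by blast
    then show "x \<in> pptp_values (a*d) (b*d) (tensor_map d d U id_units) (k * real d)"
      unfolding pptp_values_def trace_choi_phi_tensor[OF b d, symmetric]
      using pptp_feasible_phi_tensor[OF b d k] by blast
  qed
qed

lemma pptp_feasible_antimono:
  assumes k: "0 < k" "k \<le> k'" and F: "pptp_feasible a b k' \<rho> W"
  shows "pptp_feasible a b k \<rho> W"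
proof -
  let ?K = "\<lambda>v. sesq (a*b) (kron b \<rho> (idm b)) v v"
  have "complex_of_real (1/k') * ?K v \<le> complex_of_real (1/k) * ?K v" for v
    using k pptp_feasible_psd(1)[OF F] unfolding psd_iff_sesq
    by (intro mult_right_mono) (auto simp: less_eq_complex_def frac_le)
  with F show ?thesis
    unfolding pptp_feasible_iff_sesq by (meson neg_le_iff_le order_trans)
qed

lemma ptrans_msmult: "ptrans b (msmult c W) = msmult c (ptrans b W)"
  unfolding ptrans_def msmult_def ..

lemma pptp_feasible_scale:
  assumes k: "0 < k" "k \<le> k'" and F: "pptp_feasible a b k \<rho> W"
  shows "pptp_feasible a b k' \<rho> (msmult (of_real (k / k')) W)"
  unfolding pptp_feasible_iff_sesq ptrans_msmult sesq_msmult
proof (intro conjI allI)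
  let ?t = "complex_of_real (k / k')" and ?K = "\<lambda>v. sesq (a*b) (kron b \<rho> (idm b)) v v"
  have "k / k' * (1 / k) = 1 / k'"
    using k by simp
  then have t: "0 \<le> ?t" "?t \<le> 1" "?t * complex_of_real (1/k) = complex_of_real (1/k')"
    using k by (auto simp: less_eq_complex_def simp del: of_real_divide simp flip: of_real_mult)
  show "trace a \<rho> = 1" using F unfolding pptp_feasible_iff_sesq by simp
  fix v
  have W: "0 \<le> sesq (a*b) W v v" "sesq (a*b) W v v \<le> ?K v"
    and Y: "- (complex_of_real (1/k) * ?K v) \<le> sesq (a*b) (ptrans b W) v v"
      "sesq (a*b) (ptrans b W) v v \<le> complex_of_real (1/k) * ?K v"
    using F unfolding pptp_feasible_iff_sesq by simp_all
  show "0 \<le> ?t * sesq (a*b) W v v" by (rule mult_nonneg_nonneg[OF t(1) W(1)])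
  have "?t * sesq (a*b) W v v \<le> 1 * sesq (a*b) W v v"
    using t W by (intro mult_right_mono) simp_all
  then show "?t * sesq (a*b) W v v \<le> ?K v" using W by simp
  have "?t * (- (complex_of_real (1/k) * ?K v)) \<le> ?t * sesq (a*b) (ptrans b W) v v"
    using t Y by (intro mult_left_mono) simp_all
  then show "- (complex_of_real (1/k') * ?K v) \<le> ?t * sesq (a*b) (ptrans b W) v v"
    by (simp only: mult_minus_right mult.assoc[symmetric] t(3))
  have "?t * sesq (a*b) (ptrans b W) v v \<le> ?t * (complex_of_real (1/k) * ?K v)"
    using t Y by (intro mult_left_mono) simp_all
  then show "?t * sesq (a*b) (ptrans b W) v v \<le> complex_of_real (1/k') * ?K v"
    by (simp only: mult.assoc[symmetric] t(3))
qed

lemma pptp_feasible_state_psd: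
  assumes b: "0 < b" and F: "pptp_feasible a b k \<rho> W"
  shows "psd a \<rho>"
  unfolding psd_iff_sesq
proof
  fix v
  have "0 \<le> (\<Sum>i<a. \<Sum>j<a. cnj (v i) * kron b \<rho> (idm b) (i*b) (j*b) * v j)"
    by (rule psd_compress[OF pptp_feasible_psd(1)[OF F]]) (use b in auto)
  then show "0 \<le> sesq a \<rho> v v"
    unfolding sesq_def kron_def idm_def using b by simp
qed

lemma pptp_feasible_kron_diag_le:
  assumes b: "0 < b" and F: "pptp_feasible a b k \<rho> W" and p: "p < a*b"
  shows "Re (kron b \<rho> (idm b) p p) \<le> 1"
proof -
  have diag: "0 \<le> \<rho> i i" if "i < a" for i
    using psd_diag_nonneg[OF pptp_feasible_state_psd[OF b F] that] .
  have "p div b < a" using p by (simp add: less_mult_imp_div_less)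
  then have "Re (\<rho> (p div b) (p div b)) \<le> (\<Sum>i<a. Re (\<rho> i i))"
    by (intro member_le_sum) (use diag in \<open>auto simp: less_eq_complex_def\<close>)
  also have "\<dots> = 1"
    using F unfolding pptp_feasible_iff_sesq trace_def by (simp flip: Re_sum)
  finally show ?thesis using b by (simp add: kron_def idm_def)
qed

lemma pptp_feasible_norm_le:
  assumes b: "0 < b" and k: "0 < k" and F: "pptp_feasible a b k \<rho> W"
    and p: "p < a*b" and q: "q < a*b"
  shows "cmod (W p q) \<le> 2 / k"
proof -
  let ?K = "kron b \<rho> (idm b)" and ?Y = "ptrans b W" and ?c = "complex_of_real (1/k)"
  have Y_le: "cmod (?Y p' q') \<le> 2 / k" if "p' < a*b" "q' < a*b" for p' q'
  proof -
    have "cmod (?c * ?K p' q' + ?Y p' q') \<le> Re (?c * ?K p' p' + ?Y p' p') + Re (?c * ?K q' q' + ?Y q' q')"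
      and "cmod (?c * ?K p' q' - ?Y p' q') \<le> Re (?c * ?K p' p' - ?Y p' p') + Re (?c * ?K q' q' - ?Y q' q')"
      using psd_norm_entry_le[OF pptp_feasible_psd(2)[OF F] that]
        psd_norm_entry_le[OF pptp_feasible_psd(3)[OF F] that] by simp_all
    moreover have "?Y p' q' = ((?c * ?K p' q' + ?Y p' q') - (?c * ?K p' q' - ?Y p' q')) / 2"
      by simp
    then have "cmod (?Y p' q') \<le> (cmod (?c * ?K p' q' + ?Y p' q') + cmod (?c * ?K p' q' - ?Y p' q')) / 2"
      by (metis divide_right_mono norm_divide norm_numeral norm_triangle_ineq4 real_norm_def zero_le_numeral)
    ultimately have "cmod (?Y p' q') \<le> (2 / k * Re (?K p' p') + 2 / k * Re (?K q' q')) / 2"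
      by simp
    also have "\<dots> \<le> (2 / k * 1 + 2 / k * 1) / 2"
      using pptp_feasible_kron_diag_le[OF b F] that k
      by (intro divide_right_mono add_mono mult_left_mono) auto
    finally show ?thesis by simp
  qed
  have block: "x div b * b + y mod b < a * b" if "x < a * b" for x y
  proof -
    have "x div b + 1 \<le> a" using that by (simp add: less_mult_imp_div_less Suc_leI)
    then have "(x div b + 1) * b \<le> a * b" by (rule mult_right_mono) simp
    then show ?thesis using mod_less_divisor[OF b, of y] by (simp add: algebra_simps)
  qed
  have "W p q = ?Y (p div b * b + q mod b) (q div b * b + p mod b)"
    unfolding ptrans_def using b by simp
  then show ?thesis using Y_le block p q by simp
qed

lemma pptp_values_le:
  assumes b: "0 < b" and k: "0 < k" and x: "x \<in> pptp_values a b U k"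
  shows "x \<le> 2 * (\<Sum>p<a*b. \<Sum>q<a*b. cmod (choi b U p q)) / k"
proof -
  obtain \<rho> W where x: "x = Re (trace (a*b) (mmult (a*b) (choi b U) W))"
    and F: "pptp_feasible a b k \<rho> W"
    using assms unfolding pptp_values_def by blast
  have "x \<le> cmod (\<Sum>p<a*b. \<Sum>q<a*b. choi b U p q * W q p)"
    unfolding x trace_mmult by (rule complex_Re_le_cmod)
  also have "\<dots> \<le> (\<Sum>p<a*b. \<Sum>q<a*b. cmod (choi b U p q) * cmod (W q p))"
    by (rule order_trans[OF norm_sum sum_mono], rule order_trans[OF norm_sum sum_mono])
      (simp add: norm_mult)
  also have "\<dots> \<le> (\<Sum>p<a*b. \<Sum>q<a*b. cmod (choi b U p q) * (2 / k))"
    by (intro sum_mono mult_left_mono pptp_feasible_norm_le[OF b k F]) auto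
  also have "\<dots> = 2 * (\<Sum>p<a*b. \<Sum>q<a*b. cmod (choi b U p q)) / k"
    by (simp add: sum_distrib_left sum_distrib_right sum_divide_distrib mult.commute)
  finally show ?thesis .
qed

lemma pptp_values_nonempty:
  assumes a: "0 < a" and b: "0 < b" and k: "0 \<le> k"
  shows "pptp_values a b U k \<noteq> {}"
proof -
  define \<rho> :: cmat where "\<rho> = (\<lambda>i j. if i = 0 \<and> j = 0 then 1 else 0)"
  have K: "0 \<le> sesq (a*b) (kron b \<rho> (idm b)) v v" for v
  proof -
    have "(\<Sum>q<a*b. cnj (v p) * kron b \<rho> (idm b) p q * v q) = (if p < b then cnj (v p) * v p else 0)"
      if "p < a*b" for p
    proof -
      have "(\<Sum>q<a*b. cnj (v p) * kron b \<rho> (idm b) p q * v q)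
          = (\<Sum>q<a*b. if q = p then (if p < b then cnj (v p) * v p else 0) else 0)"
        using b by (intro sum.cong refl) (auto simp: kron_def idm_def \<rho>_def div_eq_0_iff)
      then show ?thesis using that by simp
    qed
    then have "sesq (a*b) (kron b \<rho> (idm b)) v v = (\<Sum>p<a*b. if p < b then cnj (v p) * v p else 0)"
      unfolding sesq_def by simp
    also have "0 \<le> \<dots>"
      by (intro sum_nonneg) (simp add: less_eq_complex_def)
    finally show ?thesis .
  qed
  have c: "0 \<le> complex_of_real (1/k)"
    using k by (simp only: complex_of_real_nonneg) simp
  have "ptrans b (\<lambda>_ _. 0) = (\<lambda>_ _. 0)"
    unfolding ptrans_def ..
  then have "pptp_feasible a b k \<rho> (\<lambda>_ _. 0)"
    unfolding pptp_feasible_iff_sesq sesq_zero_mat neg_le_iff_add_nonneg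
    using a K mult_nonneg_nonneg[OF c K] by (simp add: \<rho>_def trace_def sesq_zero_mat)
  then show ?thesis unfolding pptp_values_def by blast
qed

lemma pptp_values_bdd_above:
  assumes "0 < b" "0 < k"
  shows "bdd_above (pptp_values a b U k)"
  using pptp_values_le[OF assms] unfolding bdd_above_def by blast

lemma F_pptp_le:
  assumes "0 < a" "0 < b" "0 < k"
  shows "F_pptp a b U k \<le> 2 * (\<Sum>p<a*b. \<Sum>q<a*b. cmod (choi b U p q)) / k"
  unfolding F_pptp_eq_Sup
  by (rule cSup_least[OF pptp_values_nonempty]) (use assms pptp_values_le in auto)

lemma F_pptp_antimono:
  assumes "0 < a" "0 < b" "0 < k" "k \<le> k'"
  shows "F_pptp a b U k' \<le> F_pptp a b U k"
  unfolding F_pptp_eq_Sup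
proof (rule cSup_subset_mono[OF pptp_values_nonempty pptp_values_bdd_above])
  show "pptp_values a b U k' \<subseteq> pptp_values a b U k"
    unfolding pptp_values_def using pptp_feasible_antimono[OF assms(3,4)] by blast
qed (use assms in auto)

lemma trace_mmult_msmult: "trace n (mmult n J (msmult c W)) = c * trace n (mmult n J W)"
  unfolding trace_def mmult_def msmult_def by (simp add: sum_distrib_left algebra_simps)

lemma mult_F_pptp_mono:
  assumes a: "0 < a" and b: "0 < b" and k: "0 < k" "k \<le> k'"
  shows "k * F_pptp a b U k \<le> k' * F_pptp a b U k'"
proof -
  have k': "0 < k'" using k by simp
  have "x \<le> k' / k * F_pptp a b U k'" if x_in: "x \<in> pptp_values a b U k" for x
  proof -
    obtain \<rho> W where x: "x = Re (trace (a*b) (mmult (a*b) (choi b U) W))"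
      and F: "pptp_feasible a b k \<rho> W"
      using x_in unfolding pptp_values_def by blast
    have "k / k' * x = Re (trace (a*b) (mmult (a*b) (choi b U) (msmult (of_real (k / k')) W)))"
      unfolding trace_mmult_msmult x by simp
    then have "k / k' * x \<in> pptp_values a b U k'"
      unfolding pptp_values_def using pptp_feasible_scale[OF k F] by blast
    then have "k / k' * x \<le> F_pptp a b U k'"
      unfolding F_pptp_eq_Sup by (rule cSup_upper[OF _ pptp_values_bdd_above[OF b k']])
    then show ?thesis using k k' by (simp add: field_simps)
  qed
  then have "F_pptp a b U k \<le> k' / k * F_pptp a b U k'"
    unfolding F_pptp_eq_Sup by (intro cSup_least pptp_values_nonempty) (use a b k in auto)
  then show ?thesis using k by (simp add: field_simps)
qed

lemma F_pptp_one_bdd_above: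
  assumes a: "0 < a" and b: "0 < b"
  shows "bdd_above {k. 0 < k \<and> F_pptp a b U k = 1}"
proof -
  have "k \<le> 2 * (\<Sum>p<a*b. \<Sum>q<a*b. cmod (choi b U p q))" if "0 < k" "F_pptp a b U k = 1" for k
    using F_pptp_le[OF a b that(1), where U = U] that by (simp add: le_divide_eq)
  then show ?thesis unfolding bdd_above_def by blast
qed

lemma F_pptp_Sup_one:
  assumes a: "0 < a" and b: "0 < b" and k0: "0 < k0" "F_pptp a b U k0 = 1"
  defines "g \<equiv> Sup {k. 0 < k \<and> F_pptp a b U k = 1}"
  shows "0 < g" and "F_pptp a b U g = 1"
proof -
  let ?S = "{k. 0 < k \<and> F_pptp a b U k = 1}"
  have le_g: "k \<le> g" if "k \<in> ?S" for k
    unfolding g_def by (rule cSup_upper[OF that F_pptp_one_bdd_above[OF a b]])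
  have k0_g: "k0 \<le> g" using le_g k0 by simp
  then show "0 < g" using k0 by simp
  have "g \<le> g * F_pptp a b U g"
    unfolding g_def
  proof (rule cSup_least)
    show "?S \<noteq> {}" using k0 by blast
    fix k assume k: "k \<in> ?S"
    then have "k * F_pptp a b U k \<le> g * F_pptp a b U g"
      using mult_F_pptp_mono[OF a b] le_g by blast
    then show "k \<le> Sup ?S * F_pptp a b U (Sup ?S)"
      using k unfolding g_def by simp
  qed
  moreover have "F_pptp a b U g \<le> 1"
    using F_pptp_antimono[OF a b k0(1) k0_g, where U = U] k0(2) by simp
  ultimately show "F_pptp a b U g = 1" using \<open>0 < g\<close> by simp
qed

lemma F_pptp_one_greatest:
  assumes a: "0 < a" and b: "0 < b"
  obtains g where "0 \<le> g" "g = 0 \<or> F_pptp a b U g = 1"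
    and "\<And>k. 0 \<le> k \<Longrightarrow> k = 0 \<or> F_pptp a b U k = 1 \<Longrightarrow> k \<le> g"
proof (cases "\<exists>k>0. F_pptp a b U k = 1")
  case False
  show ?thesis
  proof (rule that[of 0])
    show "k \<le> 0" if "0 \<le> k" "k = 0 \<or> F_pptp a b U k = 1" for k
      using False that by (cases "k = 0") auto
  qed simp_all
next
  case True
  then obtain k0 where k0: "0 < k0" "F_pptp a b U k0 = 1" by blast
  let ?g = "Sup {k. 0 < k \<and> F_pptp a b U k = 1}"
  show ?thesis
  proof (rule that[of ?g])
    show "0 \<le> ?g" "?g = 0 \<or> F_pptp a b U ?g = 1"
      using F_pptp_Sup_one[OF a b k0] by simp_all
    show "k \<le> ?g" if "0 \<le> k" "k = 0 \<or> F_pptp a b U k = 1" for k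
    proof (cases "k = 0")
      case False
      then show ?thesis using that cSup_upper[OF _ F_pptp_one_bdd_above[OF a b]] by simp
    qed (use F_pptp_Sup_one[OF a b k0] in simp)
  qed
qed

lemma Greatest_rescale:
  fixes c g :: real
  assumes c: "0 < c" and Q: "\<And>x. Q x \<longleftrightarrow> P (x / c)" and g: "P g" "\<And>y. P y \<Longrightarrow> y \<le> g"
  shows "(GREATEST x. Q x) = c * g"
proof (rule Greatest_equality)
  show "Q (c * g)" using Q g(1) c by simp
  fix y assume "Q y"
  then have "y / c \<le> g" using Q g(2) by blast
  then show "y \<le> c * g" using c by (simp add: divide_le_eq mult.commute)
qed

theorem proposition1:
  fixes a b d :: nat and U :: "nat \<Rightarrow> nat \<Rightarrow> cmat"
  assumes "quantum_channel a b U" and "1 \<le> d"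
  shows "(\<forall>k::real. 0 < k \<longrightarrow>
            F_pptp (a * d) (b * d) (tensor_map d d U id_units) (k * real d) = F_pptp a b U k)
       \<and> kappa_pptp (a * d) (b * d) (tensor_map d d U id_units) = real d * kappa_pptp a b U"
proof -
  have a: "0 < a" and b: "0 < b" using assms(1) unfolding quantum_channel_def by auto
  have d: "0 < d" using assms(2) by simp
  let ?T = "tensor_map d d U id_units"
  have F: "F_pptp (a * d) (b * d) ?T (k * real d) = F_pptp a b U k" if "0 < k" for k
    unfolding F_pptp_eq_Sup pptp_values_tensor_id[OF b d that] ..
  obtain g where g: "0 \<le> g" "g = 0 \<or> F_pptp a b U g = 1"
    and g_max: "\<And>k. 0 \<le> k \<Longrightarrow> k = 0 \<or> F_pptp a b U k = 1 \<Longrightarrow> k \<le> g"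
    using F_pptp_one_greatest[OF a b, where U = U] by blast
  have "kappa_pptp a b U = g"
    unfolding kappa_pptp_def by (rule Greatest_equality) (use g g_max in auto)
  moreover have "kappa_pptp (a * d) (b * d) ?T = real d * g"
    unfolding kappa_pptp_def
  proof (rule Greatest_rescale)
    fix x :: real
    show "(0 \<le> x \<and> (x = 0 \<or> F_pptp (a * d) (b * d) ?T x = 1)) \<longleftrightarrow>
        (0 \<le> x / real d \<and> (x / real d = 0 \<or> F_pptp a b U (x / real d) = 1))"
      using F[of "x / real d"] d by (cases "0 < x") (auto simp: zero_le_divide_iff)
  qed (use d g g_max in auto)
  ultimately show ?thesis using F by simp
qed

end
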